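(* Let $(X,\sigma,T)$ be as in the context and $\xi\in X_{eq}$. The following are equivalent: (1) every point of $\pi_{eq}^{-1}(\xi)$ separates the idempotents of $L$; (2) for each $x\in X$, $R^{\xi-\pi_{eq}(x)}_{\mathrm{ev}_x}\subset\mathcal R$; (3) for each $x\in\pi_{eq}^{-1}(\xi)$, $R^0_{\mathrm{ev}_x}\subset\mathcal R$.
   Context: $T$ abelian group acting continuously, minimally and non-distally by $\sigma$ on a compact Hausdorff space $X$. $E(X)$ is the Ellis semigroup (closure of $\{\sigma^t\}$ in $X^X$, pointwise topology). $\pi_{eq}:X\to X_{eq}$ is the maximal equicontinuous factor, $X_{eq}$ a compact abelian group with neutral element $0$. Fix a minimal idempotent $e$ and $L=E(X)e$; $L$ is a completely simple semigroup, so each $f\in L$ has a unique normal inverse $f^{-1}$ (with $ff^{-1}f=f$, $f^{-1}ff^{-1}=f^{-1}$, $ff^{-1}=f^{-1}f$); put $f^0=f^{-1}f$ (an idempotent with $f^0f=f$). Green's relation $\mathcal R$ on $L$: $(f_1,f_2)\in\mathcal R$ iff $f_1^0=f_2^0$. $J_L$ denotes the set of idempotents of $L$; a point $x\in X$ separates the idempotents of $L$ if $p\mapsto p(x)$ is injective on $J_L$. $\tilde\pi_{eq}:L\to X_{eq}$, $\tilde\pi_{eq}(f)=\pi_{eq}(f(x))-\pi_{eq}(x)$ (independent of $x$). For $x\in X$, $\zeta\in X_{eq}$: $R^\zeta_{\mathrm{ev}_x}=\{(f_1,f_2)\in L\times L: f_1(x)=f_2(x),\ \tilde\pi_{eq}(f_1)=\tilde\pi_{eq}(f_2)=\zeta\}$.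 *)

theory Defs
  imports "HOL-Analysis.Analysis"
begin

text \<open>An action of the abelian group T on X by homeomorphisms sigma t
  (continuity of each sigma t; T carries no topology beyond that).\<close>
definition group_action :: "('t::ab_group_add \<Rightarrow> 'x \<Rightarrow> 'x) \<Rightarrow> bool" where
  "group_action \<sigma> \<longleftrightarrow> \<sigma> 0 = id \<and> (\<forall>s t. \<sigma> (s + t) = \<sigma> s \<circ> \<sigma> t)"

definition continuous_action ::
  "('t::ab_group_add \<Rightarrow> 'x::topological_space \<Rightarrow> 'x) \<Rightarrow> bool" where
  "continuous_action \<sigma> \<longleftrightarrow> group_action \<sigma> \<and> (\<forall>t. continuous_on UNIV (\<sigma> t))"

definition minimal_action :: "('t \<Rightarrow> 'x::topological_space \<Rightarrow> 'x) \<Rightarrow> bool" where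
  "minimal_action \<sigma> \<longleftrightarrow> (\<forall>x. closure (range (\<lambda>t. \<sigma> t x)) = UNIV)"

definition proximal :: "('t \<Rightarrow> 'x::topological_space \<Rightarrow> 'x) \<Rightarrow> 'x \<Rightarrow> 'x \<Rightarrow> bool" where
  "proximal \<sigma> x y \<longleftrightarrow> (\<exists>z. (z, z) \<in> closure (range (\<lambda>t. (\<sigma> t x, \<sigma> t y))))"

definition distal_action :: "('t \<Rightarrow> 'x::topological_space \<Rightarrow> 'x) \<Rightarrow> bool" where
  "distal_action \<sigma> \<longleftrightarrow> (\<forall>x y. proximal \<sigma> x y \<longrightarrow> x = y)"

text \<open>The Ellis semigroup: closure of the maps sigma t in X^X with the
  product (pointwise convergence) topology; the product is composition.\<close>
definition Ellis :: "('t \<Rightarrow> 'x \<Rightarrow> 'x::topological_space) \<Rightarrow> ('x \<Rightarrow> 'x) set" where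
  "Ellis \<sigma> = closure (range \<sigma>)"

definition left_ideal :: "('x \<Rightarrow> 'x) set \<Rightarrow> ('x \<Rightarrow> 'x) set \<Rightarrow> bool" where
  "left_ideal E I \<longleftrightarrow> I \<noteq> {} \<and> I \<subseteq> E \<and> (\<forall>f\<in>E. \<forall>g\<in>I. f \<circ> g \<in> I)"

definition minimal_left_ideal :: "('x \<Rightarrow> 'x) set \<Rightarrow> ('x \<Rightarrow> 'x) set \<Rightarrow> bool" where
  "minimal_left_ideal E I \<longleftrightarrow> left_ideal E I \<and> (\<forall>J. left_ideal E J \<and> J \<subseteq> I \<longrightarrow> J = I)"

definition minimal_idempotent :: "('x \<Rightarrow> 'x) set \<Rightarrow> ('x \<Rightarrow> 'x) \<Rightarrow> bool" where
  "minimal_idempotent E e \<longleftrightarrow> e \<in> E \<and> e \<circ> e = e \<and> (\<exists>I. minimal_left_ideal E I \<and> e \<in> I)"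

definition Lideal :: "('x \<Rightarrow> 'x) set \<Rightarrow> ('x \<Rightarrow> 'x) \<Rightarrow> ('x \<Rightarrow> 'x) set" where
  "Lideal E e = (\<lambda>f. f \<circ> e) ` E"

definition normal_inv :: "('x \<Rightarrow> 'x) set \<Rightarrow> ('x \<Rightarrow> 'x) \<Rightarrow> ('x \<Rightarrow> 'x)" where
  "normal_inv L f = (THE g. g \<in> L \<and> f \<circ> g \<circ> f = f \<and> g \<circ> f \<circ> g = g \<and> f \<circ> g = g \<circ> f)"

definition idem0 :: "('x \<Rightarrow> 'x) set \<Rightarrow> ('x \<Rightarrow> 'x) \<Rightarrow> ('x \<Rightarrow> 'x)" where
  "idem0 L f = normal_inv L f \<circ> f"

definition greenR :: "('x \<Rightarrow> 'x) set \<Rightarrow> (('x \<Rightarrow> 'x) \<times> ('x \<Rightarrow> 'x)) set" where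
  "greenR L = {(f1, f2). f1 \<in> L \<and> f2 \<in> L \<and> idem0 L f1 = idem0 L f2}"

definition idempotents :: "('x \<Rightarrow> 'x) set \<Rightarrow> ('x \<Rightarrow> 'x) set" where
  "idempotents L = {p \<in> L. p \<circ> p = p}"

definition separates_idempotents :: "('x \<Rightarrow> 'x) set \<Rightarrow> 'x \<Rightarrow> bool" where
  "separates_idempotents L x \<longleftrightarrow> inj_on (\<lambda>p. p x) (idempotents L)"

text \<open>A factor of (X, sigma) onto a compact Hausdorff space Y (an abstract
  topology; the points of Y are taken to be subsets of X, which is no loss of
  generality since every factor is isomorphic to the one whose points are its
  fibres), with induced maps tau t, such that the family tau is equicontinuous
  (for the unique uniformity of the compact Hausdorff space Y: entourages are
  the neighbourhoods of the diagonal).\<close>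
definition equicontinuous_factor ::
  "('t \<Rightarrow> 'x::topological_space \<Rightarrow> 'x) \<Rightarrow> ('x \<Rightarrow> 'x set) \<Rightarrow> bool" where
  "equicontinuous_factor \<sigma> \<psi> \<longleftrightarrow>
    (\<exists>(Y :: 'x set topology) (\<tau> :: 't \<Rightarrow> 'x set \<Rightarrow> 'x set).
       compact_space Y \<and> Hausdorff_space Y \<and>
       continuous_map euclidean Y \<psi> \<and> \<psi> ` UNIV = topspace Y \<and>
       (\<forall>t. continuous_map Y Y (\<tau> t)) \<and>
       (\<forall>t x. \<psi> (\<sigma> t x) = \<tau> t (\<psi> x)) \<and>
       (\<forall>y\<in>topspace Y. \<forall>W. openin (prod_topology Y Y) W \<and> (\<forall>z\<in>topspace Y. (z, z) \<in> W) \<longrightarrow>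
          (\<exists>U. openin Y U \<and> y \<in> U \<and> (\<forall>t. \<forall>y'\<in>U. (\<tau> t y, \<tau> t y') \<in> W))))"

definition max_equicontinuous_factor ::
  "('t::ab_group_add \<Rightarrow> 'x::topological_space \<Rightarrow> 'x) \<Rightarrow>
   ('x \<Rightarrow> 'g::{topological_ab_group_add, t2_space}) \<Rightarrow> ('t \<Rightarrow> 'g) \<Rightarrow> bool" where
  "max_equicontinuous_factor \<sigma> \<pi> rho \<longleftrightarrow>
     compact (UNIV :: 'g set) \<and>
     continuous_on UNIV \<pi> \<and> surj \<pi> \<and>
     (\<forall>s t. rho (s + t) = rho s + rho t) \<and>
     (\<forall>t x. \<pi> (\<sigma> t x) = \<pi> x + rho t) \<and>
     (\<forall>\<psi>. equicontinuous_factor \<sigma> \<psi> \<longrightarrow> (\<forall>x y. \<pi> x = \<pi> y \<longrightarrow> \<psi> x = \<psi> y))"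

text \<open>tilde pi_eq (f) = pi(f x) - pi(x), evaluated at the point x in question
  (it is independent of x), and the relation R^zeta_{ev_x}.\<close>
definition pi_tilde :: "('x \<Rightarrow> 'g::ab_group_add) \<Rightarrow> ('x \<Rightarrow> 'x) \<Rightarrow> 'x \<Rightarrow> 'g" where
  "pi_tilde \<pi> f x = \<pi> (f x) - \<pi> x"

definition R_ev :: "('x \<Rightarrow> 'g::ab_group_add) \<Rightarrow> ('x \<Rightarrow> 'x) set \<Rightarrow> 'g \<Rightarrow> 'x \<Rightarrow>
    (('x \<Rightarrow> 'x) \<times> ('x \<Rightarrow> 'x)) set" where
  "R_ev \<pi> L \<zeta> x = {(f1, f2). f1 \<in> L \<and> f2 \<in> L \<and> f1 x = f2 x \<and>
      pi_tilde \<pi> f1 x = \<zeta> \<and> pi_tilde \<pi> f2 x = \<zeta>}"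

end

theory Submission
  imports Defs
begin

text \<open>Only the algebra of the minimal left ideal L is involved. Every idempotent of L is a right identity of L, which yields the
  normal inverse; then f^0 is an idempotent fixing every point f(x). Hence f1(x) = f2(x) means
  that the idempotents f1^0 and f2^0 agree at f1(x), a point of the fibre over \<xi> when
  pi_tilde f1 = \<xi> - \<pi>(x). Conversely, idempotents u have pi_tilde u = 0 and u^0 = u, so two
  idempotents agreeing at x form a pair of R^0 at x, which lies in Green's relation only if
  they are equal.\<close>

lemma continuous_on_comp_right:
  "continuous_on S (\<lambda>r::'a \<Rightarrow> 'b::topological_space. r \<circ> q)"
  by (rule continuous_on_coordinatewise_then_product)
    (auto intro: continuous_on_subset[OF continuous_on_product_coordinates])

lemma continuous_on_comp_left:
  fixes g :: "'b::topological_space \<Rightarrow> 'c::topological_space"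
  assumes "continuous_on UNIV g"
  shows "continuous_on S (\<lambda>r::'a \<Rightarrow> 'b. g \<circ> r)"
proof (rule continuous_on_coordinatewise_then_product)
  fix i
  have "continuous_on UNIV (\<lambda>r::'a \<Rightarrow> 'b. g (r i))"
    by (rule continuous_on_compose2[OF assms continuous_on_product_coordinates]) auto
  then show "continuous_on S (\<lambda>r. (g \<circ> r) i)"
    by (auto intro: continuous_on_subset)
qed

lemma Ellis_comp_closed:
  fixes \<sigma> :: "'t::ab_group_add \<Rightarrow> 'x::topological_space \<Rightarrow> 'x"
  assumes "continuous_action \<sigma>" and "p \<in> Ellis \<sigma>" and "q \<in> Ellis \<sigma>"
  shows "p \<circ> q \<in> Ellis \<sigma>"
proof -
  have add: "\<And>s t. \<sigma> (s + t) = \<sigma> s \<circ> \<sigma> t" and cont: "\<And>t. continuous_on UNIV (\<sigma> t)"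
    using assms(1) by (auto simp: continuous_action_def group_action_def)
  have closed: "closed (Ellis \<sigma>)"
    by (simp add: Ellis_def)
  have left: "\<sigma> t \<circ> r \<in> Ellis \<sigma>" if "r \<in> Ellis \<sigma>" for t r
  proof -
    have "(\<lambda>r. \<sigma> t \<circ> r) ` range \<sigma> \<subseteq> Ellis \<sigma>"
      using closure_subset[of "range \<sigma>"] by (auto simp: Ellis_def add[symmetric])
    from image_closure_subset[OF continuous_on_comp_left[OF cont] closed this] that
    show ?thesis by (auto simp: Ellis_def)
  qed
  have "(\<lambda>r. r \<circ> q) ` range \<sigma> \<subseteq> Ellis \<sigma>"
    using left assms(3) by auto
  from image_closure_subset[OF continuous_on_comp_right closed this] assms(2)
  show ?thesis by (auto simp: Ellis_def)
qed

lemma pi_tilde_Ellis_independent: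
  fixes \<pi> :: "'x::topological_space \<Rightarrow> 'g::{topological_ab_group_add, t2_space}"
  assumes cont: "continuous_on UNIV \<pi>" and equiv: "\<And>t x. \<pi> (\<sigma> t x) = \<pi> x + rho t"
    and "f \<in> Ellis \<sigma>"
  shows "pi_tilde \<pi> f x = pi_tilde \<pi> f y"
proof -
  let ?S = "{f. \<pi> (f x) - \<pi> x = \<pi> (f y) - \<pi> y}"
  have "continuous_on UNIV (\<lambda>f::'x \<Rightarrow> 'x. \<pi> (f z) - \<pi> z)" for z
    by (intro continuous_on_diff continuous_on_const
        continuous_on_compose2[OF cont continuous_on_product_coordinates]) auto
  then have "closed ?S"
    using closed_Collect_eq by blast
  moreover have "range \<sigma> \<subseteq> ?S"
    by (auto simp: equiv)
  ultimately have "Ellis \<sigma> \<subseteq> ?S"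
    unfolding Ellis_def by (rule closure_minimal[rotated])
  with assms(3) show ?thesis
    by (auto simp: pi_tilde_def)
qed

lemma pi_tilde_idempotent:
  fixes \<pi> :: "'x::topological_space \<Rightarrow> 'g::{topological_ab_group_add, t2_space}"
  assumes "continuous_on UNIV \<pi>" and "\<And>t x. \<pi> (\<sigma> t x) = \<pi> x + rho t"
    and "u \<in> Ellis \<sigma>" and "u \<circ> u = u"
  shows "pi_tilde \<pi> u x = 0"
proof -
  have "pi_tilde \<pi> u (u x) = pi_tilde \<pi> u x"
    by (rule pi_tilde_Ellis_independent[OF assms(1-3)])
  moreover have "u (u x) = u x"
    using assms(4) by (metis comp_apply)
  ultimately show ?thesis
    by (simp add: pi_tilde_def)
qed

lemma normal_inverse_unique:
  assumes "f \<circ> g \<circ> f = f" "g \<circ> f \<circ> g = g" "f \<circ> g = g \<circ> f"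
    and "f \<circ> g' \<circ> f = f" "g' \<circ> f \<circ> g' = g'" "f \<circ> g' = g' \<circ> f"
  shows "g = g'"
proof -
  have "g \<circ> f = (g \<circ> f) \<circ> (g' \<circ> f)"
    using assms(4) by (simp add: comp_assoc)
  also have "\<dots> = (f \<circ> g) \<circ> (f \<circ> g')"
    using assms(3,6) by simp
  also have "\<dots> = (f \<circ> g \<circ> f) \<circ> g'"
    by (simp only: o_assoc)
  also have "\<dots> = g' \<circ> f"
    using assms(1,6) by simp
  finally have gf: "g \<circ> f = g' \<circ> f" .
  have "g = g \<circ> (f \<circ> g)"
    using assms(2) by (simp add: o_assoc)
  also have "\<dots> = g \<circ> (f \<circ> g')"
    using assms(3,6) gf by simp
  also have "\<dots> = (g \<circ> f) \<circ> g'"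
    by (simp only: o_assoc)
  also have "\<dots> = g'"
    using assms(5) gf by simp
  finally show ?thesis .
qed

lemma normal_inv_eqI:
  assumes "g \<in> L" "f \<circ> g \<circ> f = f" "g \<circ> f \<circ> g = g" "f \<circ> g = g \<circ> f"
  shows "normal_inv L f = g"
  unfolding normal_inv_def
  by (rule the_equality) (use assms normal_inverse_unique in blast)+

lemma idem0_idempotent:
  assumes "u \<in> idempotents L"
  shows "idem0 L u = u"
proof -
  have "u \<in> L" "u \<circ> u = u"
    using assms by (auto simp: idempotents_def)
  then show ?thesis
    by (simp add: idem0_def normal_inv_eqI)
qed

locale semigroup_minimal_idempotent =
  fixes E :: "('x \<Rightarrow> 'x) set" and e :: "'x \<Rightarrow> 'x"
  assumes comp_closed: "\<And>p q. p \<in> E \<Longrightarrow> q \<in> E \<Longrightarrow> p \<circ> q \<in> E"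
    and minimal_idempotent: "minimal_idempotent E e"
begin

abbreviation L where "L \<equiv> Lideal E e"

lemma e_in_E: "e \<in> E" and e_idem: "e \<circ> e = e"
  using minimal_idempotent by (auto simp: minimal_idempotent_def)

lemma Lideal_subset: "L \<subseteq> E"
  using comp_closed e_in_E by (auto simp: Lideal_def)

lemma e_in_Lideal: "e \<in> L"
  using e_in_E e_idem by (auto simp: Lideal_def intro!: image_eqI[of _ _ e])

lemma comp_in_Lideal: "p \<in> E \<Longrightarrow> q \<in> L \<Longrightarrow> p \<circ> q \<in> L"
  using comp_closed by (auto simp: Lideal_def o_assoc)

lemma minimal_left_ideal_Lideal: "minimal_left_ideal E L"
proof -
  obtain I where I: "minimal_left_ideal E I" "e \<in> I"
    using minimal_idempotent by (auto simp: minimal_idempotent_def)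
  have "L \<subseteq> I"
    using I e_in_E by (auto simp: Lideal_def minimal_left_ideal_def left_ideal_def)
  moreover have "left_ideal E L"
    using e_in_Lideal Lideal_subset comp_in_Lideal by (auto simp: left_ideal_def)
  ultimately show ?thesis
    using I by (auto simp: minimal_left_ideal_def)
qed

lemma Lideal_right_translate:
  assumes "f \<in> L"
  shows "(\<lambda>g. g \<circ> f) ` L = L"
proof -
  have "left_ideal E ((\<lambda>g. g \<circ> f) ` L)"
    unfolding left_ideal_def
  proof (intro conjI ballI)
    show "(\<lambda>g. g \<circ> f) ` L \<noteq> {}"
      using e_in_Lideal by auto
    show "(\<lambda>g. g \<circ> f) ` L \<subseteq> E"
      using Lideal_subset assms comp_closed by auto
    fix p h assume "p \<in> E" "h \<in> (\<lambda>g. g \<circ> f) ` L"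
    then obtain g where "g \<in> L" "h = g \<circ> f" by auto
    then show "p \<circ> h \<in> (\<lambda>g. g \<circ> f) ` L"
      using comp_in_Lideal[OF \<open>p \<in> E\<close>] by (auto simp: o_assoc intro!: image_eqI[of _ _ "p \<circ> g"])
  qed
  moreover have "(\<lambda>g. g \<circ> f) ` L \<subseteq> L"
    using comp_in_Lideal Lideal_subset assms by auto
  ultimately show ?thesis
    using minimal_left_ideal_Lideal by (auto simp: minimal_left_ideal_def)
qed

lemma Lideal_right_divide:
  assumes "f \<in> L" "w \<in> L"
  obtains h where "h \<in> L" "h \<circ> f = w"
  using Lideal_right_translate[OF assms(1)] assms(2) by (metis imageE)

lemma idempotent_right_identity:
  assumes "u \<in> idempotents L" "v \<in> L"
  shows "v \<circ> u = v"
proof -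
  have u: "u \<in> L" "u \<circ> u = u"
    using assms(1) by (auto simp: idempotents_def)
  obtain w where "w \<in> L" "w \<circ> u = v"
    using Lideal_right_divide[OF u(1) assms(2)] .
  then have "v \<circ> u = w \<circ> (u \<circ> u)"
    by (simp add: o_assoc)
  with u(2) \<open>w \<circ> u = v\<close> show ?thesis
    by simp
qed

text \<open>With h f = e and k f = w := f h, the normal inverse is g = w k, and f g = g f = w.\<close>
lemma normal_inverse_exists:
  assumes f: "f \<in> L"
  obtains g where "g \<in> L" "f \<circ> g \<circ> f = f" "g \<circ> f \<circ> g = g" "f \<circ> g = g \<circ> f"
proof -
  have right_id: "v \<circ> u = v" if "u \<in> L" "u \<circ> u = u" "v \<in> L" for u v
    using idempotent_right_identity that by (simp add: idempotents_def)
  obtain h where h: "h \<in> L" "h \<circ> f = e"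
    using Lideal_right_divide[OF f e_in_Lideal] .
  define w where "w = f \<circ> h"
  have fe: "f \<circ> e = f"
    using right_id[OF e_in_Lideal e_idem f] .
  have w: "w \<in> L" "w \<circ> w = w" "w \<circ> f = f"
    using comp_in_Lideal f h Lideal_subset fe by (auto simp: w_def o_assoc)
  obtain k where k: "k \<in> L" "k \<circ> f = w"
    using Lideal_right_divide[OF f w(1)] .
  have fk: "f \<circ> k \<in> L" "(f \<circ> k) \<circ> (f \<circ> k) = f \<circ> k"
    using comp_in_Lideal Lideal_subset f k right_id[OF w(1,2) f] by (auto simp: o_assoc)
  \<comment> \<open>the idempotents w and f k are right identities and w is a left unit of f\<close>
  have "f \<circ> k = w \<circ> (f \<circ> k)"
    using w(3) by (simp add: o_assoc)
  also have "\<dots> = w"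
    using right_id[OF fk w(1)] .
  finally have fk_w: "f \<circ> k = w" .
  define g where "g = w \<circ> k"
  have fg: "f \<circ> g = w"
    using right_id[OF w(1,2) f] fk_w by (simp add: g_def o_assoc)
  have gf: "g \<circ> f = w"
    using k w(2) by (simp add: g_def comp_assoc)
  show thesis
  proof
    show "g \<in> L"
      using comp_in_Lideal Lideal_subset k w(1) by (auto simp: g_def)
    show "f \<circ> g \<circ> f = f" "g \<circ> f \<circ> g = g" "f \<circ> g = g \<circ> f"
      using fg gf w by (simp_all add: g_def o_assoc)
  qed
qed

lemma normal_inv:
  assumes "f \<in> L"
  shows "normal_inv L f \<in> L" "f \<circ> normal_inv L f \<circ> f = f"
    "normal_inv L f \<circ> f \<circ> normal_inv L f = normal_inv L f"
    "f \<circ> normal_inv L f = normal_inv L f \<circ> f"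
  by (rule normal_inverse_exists[OF assms]; simp add: normal_inv_eqI)+

lemma idem0_in_idempotents: "f \<in> L \<Longrightarrow> idem0 L f \<in> idempotents L"
  using normal_inv[of f] comp_in_Lideal Lideal_subset
  by (auto simp: idem0_def idempotents_def o_assoc)

lemma idem0_comp_self: "f \<in> L \<Longrightarrow> idem0 L f \<circ> f = f"
  using normal_inv[of f] by (simp add: idem0_def)

lemma greenR_if_agree_at_separating_point:
  assumes "f1 \<in> L" "f2 \<in> L" "f1 x = f2 x" "separates_idempotents L (f1 x)"
  shows "(f1, f2) \<in> greenR L"
proof -
  have "idem0 L f1 (f1 x) = idem0 L f2 (f1 x)"
    using idem0_comp_self[OF assms(1)] idem0_comp_self[OF assms(2)] assms(3) by (metis comp_apply)
  then have "idem0 L f1 = idem0 L f2"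
    using assms idem0_in_idempotents by (auto simp: separates_idempotents_def dest: inj_onD)
  with assms(1,2) show ?thesis
    by (simp add: greenR_def)
qed

lemma R_ev_subset_greenR_if_fibre_separates:
  fixes \<pi> :: "'x \<Rightarrow> 'g::ab_group_add"
  assumes "\<forall>y. \<pi> y = \<xi> \<longrightarrow> separates_idempotents L y"
  shows "R_ev \<pi> L (\<xi> - \<pi> x) x \<subseteq> greenR L"
proof
  fix p assume "p \<in> R_ev \<pi> L (\<xi> - \<pi> x) x"
  then obtain f1 f2 where "p = (f1, f2)" "f1 \<in> L" "f2 \<in> L" "f1 x = f2 x" "\<pi> (f1 x) = \<xi>"
    by (auto simp: R_ev_def pi_tilde_def)
  with assms show "p \<in> greenR L"
    using greenR_if_agree_at_separating_point by blast
qed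

lemma separates_idempotents_if_R_ev_zero_subset_greenR:
  assumes "\<forall>u\<in>idempotents L. pi_tilde \<pi> u x = 0" and "R_ev \<pi> L 0 x \<subseteq> greenR L"
  shows "separates_idempotents L x"
  unfolding separates_idempotents_def
proof (rule inj_onI)
  fix u1 u2 assume u: "u1 \<in> idempotents L" "u2 \<in> idempotents L" "u1 x = u2 x"
  then have "(u1, u2) \<in> R_ev \<pi> L 0 x"
    using assms(1) by (auto simp: R_ev_def idempotents_def)
  with assms(2) have "idem0 L u1 = idem0 L u2"
    by (auto simp: greenR_def)
  with u show "u1 = u2"
    by (simp add: idem0_idempotent)
qed

end

theorem mainTheorem6:
  fixes \<sigma> :: "'t::ab_group_add \<Rightarrow> 'x::t2_space \<Rightarrow> 'x"
    and \<pi> :: "'x \<Rightarrow> 'g::{topological_ab_group_add, t2_space}"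
    and rho :: "'t \<Rightarrow> 'g"
    and e :: "'x \<Rightarrow> 'x"
    and \<xi> :: 'g
  assumes "compact (UNIV :: 'x set)"
    and "continuous_action \<sigma>"
    and "minimal_action \<sigma>"
    and "\<not> distal_action \<sigma>"
    and "max_equicontinuous_factor \<sigma> \<pi> rho"
    and "minimal_idempotent (Ellis \<sigma>) e"
  shows "((\<forall>x. \<pi> x = \<xi> \<longrightarrow> separates_idempotents (Lideal (Ellis \<sigma>) e) x)
            \<longleftrightarrow> (\<forall>x. R_ev \<pi> (Lideal (Ellis \<sigma>) e) (\<xi> - \<pi> x) x \<subseteq> greenR (Lideal (Ellis \<sigma>) e)))
       \<and> ((\<forall>x. R_ev \<pi> (Lideal (Ellis \<sigma>) e) (\<xi> - \<pi> x) x \<subseteq> greenR (Lideal (Ellis \<sigma>) e))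
            \<longleftrightarrow> (\<forall>x. \<pi> x = \<xi> \<longrightarrow> R_ev \<pi> (Lideal (Ellis \<sigma>) e) 0 x \<subseteq> greenR (Lideal (Ellis \<sigma>) e)))"
proof -
  interpret semigroup_minimal_idempotent "Ellis \<sigma>" e
    using Ellis_comp_closed[OF assms(2)] assms(6) by unfold_locales auto
  have "continuous_on UNIV \<pi>" "\<And>t x. \<pi> (\<sigma> t x) = \<pi> x + rho t"
    using assms(5) by (auto simp: max_equicontinuous_factor_def)
  then have idempotent_pi_tilde: "\<forall>u\<in>idempotents L. pi_tilde \<pi> u x = 0" for x
    using pi_tilde_idempotent Lideal_subset by (fastforce simp: idempotents_def)
  let ?P1 = "\<forall>x. \<pi> x = \<xi> \<longrightarrow> separates_idempotents L x"
  let ?P2 = "\<forall>x. R_ev \<pi> L (\<xi> - \<pi> x) x \<subseteq> greenR L"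
  let ?P3 = "\<forall>x. \<pi> x = \<xi> \<longrightarrow> R_ev \<pi> L 0 x \<subseteq> greenR L"
  have "?P1 \<Longrightarrow> ?P2"
    using R_ev_subset_greenR_if_fibre_separates by blast
  moreover have "?P2 \<Longrightarrow> ?P3"
    by (metis diff_self)
  moreover have "?P3 \<Longrightarrow> ?P1"
    using separates_idempotents_if_R_ev_zero_subset_greenR idempotent_pi_tilde by blast
  ultimately show ?thesis
    by blast
qed

end
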